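(* Let $Z$ be a decision structure and $H$ a module of $Z$. Let $Z/H$ be the module contraction of $H$ in $Z$, in which the node $H$ is labelled by the derived action $(H_B,H_R)$ of the decision structure $Z[H]$ and each node $\{v\}$, $v\notin H$, is labelled by the action labelling $v$ in $Z$. Then $Z_B=(Z/H)_B$, i.e. $Z(w)_B(w)=(Z/H)(w)_B(w)$ for every state $w$.
   Context: Fix sets $\mathbb{W}$ (states), $\mathbb{S}$ (signals), $\mathcal{R}$ (return values). An action is a pair $\alpha=(\alpha_B,\alpha_R)$ with $\alpha_B:\mathbb{W}\to\mathbb{S}$, $\alpha_R:\mathbb{W}\to\mathcal{R}$. A decision structure is a finite directed acyclic graph $Z=(N,A)$, $A\subseteq N\times N$, with a unique source, an arc labelling $\ell:A\to\mathcal{R}$ and a node labelling $\eta$ by actions, such that distinct arcs leaving the same node have distinct labels; the arc out of $v$ labelled $r$, if it exists, is the $r$-arc out of $v$. For a state $w$, $Z(w)$ is computed by starting at the source and, at node $v$ with $\eta(v)=\alpha$, moving along the $\alpha_R(w)$-arc if it exists and otherwise outputting $\alpha$. The derived action of $Z$ is $(Z_B,Z_R)$ with $Z_B(w)=Z(w)_B(w)$ and $Z_R(w)=Z(w)_R(w)$. For $X\subseteq N$, $Z[X]$ is the induced subgraph with inherited labels. $X\subseteq N(Z)$ is a module if $Z[X]$ has a unique source and for every $v\notin X$: (i) every arc from $v$ into $X$ ends at the source of $Z[X]$; (ii) if some $x\in X$ has an $r$-labelled arc to $v$, then every $x'\in X$ has an $r$-arc ending at $v$ or in $X$. For a module $H$,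 the module contraction $Z/H$ is the graph with node set $\{H\}\cup\{\{v\}:v\notin H\}$ and an arc $(S,T)$, $S\ne T$, labelled $r$ whenever some $r$-labelled arc of $Z$ goes from a node of $S$ to a node of $T$ (this is a decision structure). *)

theory Defs
  imports Main
begin

text \<open>An action: a pair (alpha_B, alpha_R) of functions on states.\<close>
type_synonym ('w,'s,'r) action = "('w \<Rightarrow> 's) \<times> ('w \<Rightarrow> 'r)"

text \<open>A (candidate) decision structure: node set, arc set, arc labelling, node labelling.
  The arc labelling is a total function on pairs; only its values on arcs matter.\<close>
record ('n,'w,'s,'r) dstruct =
  nodes :: "'n set"
  arcs  :: "('n \<times> 'n) set"
  alab  :: "'n \<times> 'n \<Rightarrow> 'r"
  nlab  :: "'n \<Rightarrow> ('w,'s,'r) action"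

definition is_source :: "('n,'w,'s,'r) dstruct \<Rightarrow> 'n \<Rightarrow> bool" where
  "is_source Z v \<longleftrightarrow> v \<in> nodes Z \<and> (\<forall>u \<in> nodes Z. (u, v) \<notin> arcs Z)"

definition unique_source :: "('n,'w,'s,'r) dstruct \<Rightarrow> bool" where
  "unique_source Z \<longleftrightarrow> (\<exists>!v. is_source Z v)"

definition source :: "('n,'w,'s,'r) dstruct \<Rightarrow> 'n" where
  "source Z = (THE v. is_source Z v)"

definition decision_structure :: "('n,'w,'s,'r) dstruct \<Rightarrow> bool" where
  "decision_structure Z \<longleftrightarrow>
     finite (nodes Z) \<and>
     arcs Z \<subseteq> nodes Z \<times> nodes Z \<and>
     acyclic (arcs Z) \<and>
     unique_source Z \<and>
     (\<forall>v u1 u2. (v, u1) \<in> arcs Z \<and> (v, u2) \<in> arcs Z \<and> u1 \<noteq> u2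
                \<longrightarrow> alab Z (v, u1) \<noteq> alab Z (v, u2))"

inductive outputs :: "('n,'w,'s,'r) dstruct \<Rightarrow> 'w \<Rightarrow> 'n \<Rightarrow> ('w,'s,'r) action \<Rightarrow> bool"
  for Z w where
  stop: "\<not> (\<exists>u. (v, u) \<in> arcs Z \<and> alab Z (v, u) = snd (nlab Z v) w)
          \<Longrightarrow> outputs Z w v (nlab Z v)"
| move: "(v, u) \<in> arcs Z \<Longrightarrow> alab Z (v, u) = snd (nlab Z v) w
          \<Longrightarrow> outputs Z w u \<alpha> \<Longrightarrow> outputs Z w v \<alpha>"

definition eval :: "('n,'w,'s,'r) dstruct \<Rightarrow> 'w \<Rightarrow> ('w,'s,'r) action" where
  "eval Z w = (THE \<alpha>. outputs Z w (source Z) \<alpha>)"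

definition derived_action :: "('n,'w,'s,'r) dstruct \<Rightarrow> ('w,'s,'r) action" where
  "derived_action Z = ((\<lambda>w. fst (eval Z w) w), (\<lambda>w. snd (eval Z w) w))"

definition induced :: "('n,'w,'s,'r) dstruct \<Rightarrow> 'n set \<Rightarrow> ('n,'w,'s,'r) dstruct" where
  "induced Z X = Z\<lparr>nodes := X, arcs := arcs Z \<inter> (X \<times> X)\<rparr>"

definition is_module :: "('n,'w,'s,'r) dstruct \<Rightarrow> 'n set \<Rightarrow> bool" where
  "is_module Z X \<longleftrightarrow>
     X \<subseteq> nodes Z \<and>
     unique_source (induced Z X) \<and>
     (\<forall>v \<in> nodes Z - X.
        (\<forall>x \<in> X. (v, x) \<in> arcs Z \<longrightarrow> x = source (induced Z X)) \<and>
        (\<forall>x \<in> X. (x, v) \<in> arcs Z \<longrightarrow>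
           (\<forall>x' \<in> X. \<exists>y. (x', y) \<in> arcs Z \<and> alab Z (x', y) = alab Z (x, v)
                          \<and> (y = v \<or> y \<in> X))))"

text \<open>An arc (S,T), S \<noteq> T, is present
  iff some arc of Z goes from S to T, and is labelled by the label of such an arc
  (this label is unique when H is a module).\<close>
definition contraction :: "('n,'w,'s,'r) dstruct \<Rightarrow> 'n set \<Rightarrow> ('n set,'w,'s,'r) dstruct" where
  "contraction Z H =
     \<lparr> nodes = {H} \<union> {{v} | v. v \<in> nodes Z - H},
       arcs = {(S, T). S \<in> {H} \<union> {{v} | v. v \<in> nodes Z - H} \<and>
                       T \<in> {H} \<union> {{v} | v. v \<in> nodes Z - H} \<and> S \<noteq> T \<and>
                       (\<exists>a \<in> S. \<exists>b \<in> T. (a, b) \<in> arcs Z)},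
       alab = (\<lambda>(S, T). SOME r. \<exists>a \<in> S. \<exists>b \<in> T. (a, b) \<in> arcs Z \<and> alab Z (a, b) = r),
       nlab = (\<lambda>S. if S = H then derived_action (induced Z H) else nlab Z (THE v. S = {v})) \<rparr>"

end

theory Submission
  imports Defs
begin

text \<open>A run of Z can enter the module H only at the source h of Z[H]. Inside H it follows the
  run of Z[H] from h up to the node x where that run stops, and then either stops as well or
  leaves H along an arc from x. The node H of Z/H carries the derived action of Z[H], which at
  the current state w agrees with the action of x; so Z/H stops exactly when Z stops in H, and
  otherwise takes the arc to the same outside node, whose label is the one of the arc from x
  because all arcs from H to a fixed outside node carry the same label. Only the B-components
  of the outputs agree: stopping in H, Z outputs the action of x, Z/H the derived action.\<close>

abbreviation moves :: "('n,'w,'s,'r) dstruct \<Rightarrow> 'w \<Rightarrow> 'n \<Rightarrow> 'n \<Rightarrow> bool" where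
  "moves Z w v u \<equiv> (v, u) \<in> arcs Z \<and> alab Z (v, u) = snd (nlab Z v) w"

definition distinct_arc_labels :: "('n,'w,'s,'r) dstruct \<Rightarrow> bool" where
  "distinct_arc_labels Z \<longleftrightarrow>
     (\<forall>v u1 u2. (v, u1) \<in> arcs Z \<and> (v, u2) \<in> arcs Z \<and> u1 \<noteq> u2
                \<longrightarrow> alab Z (v, u1) \<noteq> alab Z (v, u2))"

lemma distinct_arc_labelsD:
  "distinct_arc_labels Z \<Longrightarrow> (v, u1) \<in> arcs Z \<Longrightarrow> (v, u2) \<in> arcs Z \<Longrightarrow>
   alab Z (v, u1) = alab Z (v, u2) \<Longrightarrow> u1 = u2"
  unfolding distinct_arc_labels_def by blast

lemma distinct_arc_labels_induced:
  "distinct_arc_labels Z \<Longrightarrow> distinct_arc_labels (induced Z X)"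
  unfolding distinct_arc_labels_def induced_def by simp

lemma outputs_unique:
  assumes "distinct_arc_labels Z"
  shows "outputs Z w v \<alpha> \<Longrightarrow> outputs Z w v \<beta> \<Longrightarrow> \<alpha> = \<beta>"
proof (induction arbitrary: \<beta> rule: outputs.induct)
  case (stop v)
  from stop.prems show ?case
    by cases (use stop.hyps in blast)+
next
  case (move v u \<alpha>)
  from move.prems show ?case
  proof cases
    case (move u')
    then have "u' = u" using distinct_arc_labelsD[OF assms] move.hyps by metis
    then show ?thesis using move.IH move(3) by simp
  qed (use move.hyps in blast)
qed

lemma outputs_exists:
  assumes "wf ((arcs Z)\<inverse>)"
  shows "\<exists>\<alpha>. outputs Z w v \<alpha>"
  using assms
proof (induction v rule: wf_induct_rule)
  case (less v)
  show ?case
  proof (cases "\<exists>u. moves Z w v u")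
    case True
    then obtain u where "moves Z w v u" by blast
    moreover obtain \<alpha> where "outputs Z w u \<alpha>" using less calculation by blast
    ultimately show ?thesis using outputs.move by metis
  qed (use outputs.stop in metis)
qed

lemma eval_eqI:
  "distinct_arc_labels Z \<Longrightarrow> outputs Z w (source Z) \<alpha> \<Longrightarrow> eval Z w = \<alpha>"
  unfolding eval_def by (blast intro: the_equality outputs_unique)

lemma outputs_induced_decompose:
  assumes "distinct_arc_labels Z"
  shows "outputs Z w v \<alpha> \<Longrightarrow> v \<in> X \<Longrightarrow>
    \<exists>x\<in>X. (v, x) \<in> (arcs Z)\<^sup>* \<and> outputs (induced Z X) w v (nlab Z x) \<and>
      (\<alpha> = nlab Z x \<and> \<not> (\<exists>u. moves Z w x u) \<or>
       (\<exists>u. u \<notin> X \<and> moves Z w x u \<and> outputs Z w u \<alpha>))"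
proof (induction rule: outputs.induct)
  case (stop v)
  then have "outputs (induced Z X) w v (nlab Z v)"
    using outputs.stop[where Z = "induced Z X"] by (auto simp: induced_def)
  with stop show ?case by blast
next
  case (move v u \<alpha>)
  show ?case
  proof (cases "u \<in> X")
    case True
    then obtain x where x: "x \<in> X" "(u, x) \<in> (arcs Z)\<^sup>*" "outputs (induced Z X) w u (nlab Z x)"
      "\<alpha> = nlab Z x \<and> \<not> (\<exists>u. moves Z w x u) \<or> (\<exists>u. u \<notin> X \<and> moves Z w x u \<and> outputs Z w u \<alpha>)"
      using move.IH by blast
    have "moves (induced Z X) w v u" using move True by (simp add: induced_def)
    then have "outputs (induced Z X) w v (nlab Z x)" using x(3) outputs.move by metis
    moreover have "(v, x) \<in> (arcs Z)\<^sup>*" using move.hyps(1) x(2) by simp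
    ultimately show ?thesis using x(1,4) by blast
  next
    case False
    have "\<not> (\<exists>y. moves (induced Z X) w v y)"
      using distinct_arc_labelsD[OF assms _ move.hyps(1)] move.hyps(2) False
      by (auto simp: induced_def)
    then have "outputs (induced Z X) w v (nlab Z v)"
      using outputs.stop by (fastforce simp: induced_def)
    then show ?thesis using move False by blast
  qed
qed

locale decision_module =
  fixes Z :: "('n,'w,'s,'r) dstruct" and H :: "'n set"
  assumes decision_structure: "decision_structure Z" and module: "is_module Z H"
begin

abbreviation "Zh \<equiv> induced Z H"
abbreviation "Zc \<equiv> contraction Z H"

definition h :: 'n where "h = source Zh"

lemma arcs_subset: "arcs Z \<subseteq> nodes Z \<times> nodes Z"
  using decision_structure unfolding decision_structure_def by blast

lemma acyclic_arcs: "acyclic (arcs Z)"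
  using decision_structure unfolding decision_structure_def by blast

lemma distinct_labels: "distinct_arc_labels Z"
  using decision_structure unfolding decision_structure_def distinct_arc_labels_def by blast

lemma wf_converse_arcs: "wf ((arcs Z)\<inverse>)"
proof (rule finite_acyclic_wf_converse)
  show "finite (arcs Z)"
    using decision_structure arcs_subset unfolding decision_structure_def
    by (meson finite_SigmaI finite_subset)
qed (rule acyclic_arcs)

lemma no_self_arc: "(v, v) \<notin> arcs Z"
  using acyclic_arcs unfolding acyclic_def by blast

lemma source_is_source: "is_source Z (source Z)"
  using decision_structure unfolding decision_structure_def unique_source_def source_def
  by (blast intro: theI')

lemma is_source_unique: "is_source Z v \<Longrightarrow> v = source Z"
  using decision_structure source_is_source unfolding decision_structure_def unique_source_def
  by blast

lemma H_subset: "H \<subseteq> nodes Z"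
  using module unfolding is_module_def by blast

lemma h_is_source: "is_source Zh h"
  using module unfolding is_module_def unique_source_def h_def source_def by (blast intro: theI')

lemma h_in_H: "h \<in> H"
  using h_is_source unfolding is_source_def by (simp add: induced_def)

lemma no_arc_into_h: "u \<in> H \<Longrightarrow> (u, h) \<notin> arcs Z"
  using h_is_source unfolding is_source_def by (auto simp: induced_def)

lemma entry_is_h: "v \<notin> H \<Longrightarrow> x \<in> H \<Longrightarrow> (v, x) \<in> arcs Z \<Longrightarrow> x = h"
  using module arcs_subset unfolding is_module_def h_def by blast

lemma exit_label:
  "x \<in> H \<Longrightarrow> u \<notin> H \<Longrightarrow> (x, u) \<in> arcs Z \<Longrightarrow> a \<in> H \<Longrightarrow>
   \<exists>y. (a, y) \<in> arcs Z \<and> alab Z (a, y) = alab Z (x, u) \<and> (y = u \<or> y \<in> H)"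
  using module arcs_subset unfolding is_module_def by blast

lemma source_in_H_eq_h:
  assumes "source Z \<in> H"
  shows "source Z = h"
proof -
  have "is_source Zh (source Z)"
    using assms source_is_source H_subset unfolding is_source_def by (auto simp: induced_def)
  then show ?thesis
    using module h_is_source unfolding is_module_def unique_source_def by blast
qed

text \<open>A node of H without arcs into H must, by the second module condition, realise every
  exit label of H by an arc leaving H, and hence by an arc to the same target.\<close>

lemma module_sink:
  obtains s where "s \<in> H"
    "\<And>a u. a \<in> H \<Longrightarrow> u \<notin> H \<Longrightarrow> (a, u) \<in> arcs Z \<Longrightarrow> (s, u) \<in> arcs Z \<and> alab Z (s, u) = alab Z (a, u)"
proof -
  obtain s where s: "s \<in> H" "\<And>y. (s, y) \<in> arcs Z \<Longrightarrow> y \<notin> H"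
    using wf_converse_arcs[unfolded wf_eq_minimal, rule_format, OF h_in_H] by auto
  show thesis
  proof (rule that[OF s(1)])
    fix a u assume "a \<in> H" "u \<notin> H" "(a, u) \<in> arcs Z"
    then show "(s, u) \<in> arcs Z \<and> alab Z (s, u) = alab Z (a, u)"
      using exit_label[of a u s] s by blast
  qed
qed

lemma exit_label_uniform:
  assumes "a \<in> H" "a' \<in> H" "u \<notin> H" "(a, u) \<in> arcs Z" "(a', u) \<in> arcs Z"
  shows "alab Z (a, u) = alab Z (a', u)"
  using module_sink assms by metis

definition block :: "'n \<Rightarrow> 'n set" where
  "block v = (if v \<in> H then H else {v})"

lemma block_eq_H_iff [simp]: "block v = H \<longleftrightarrow> v \<in> H"
  unfolding block_def by auto

lemma block_inside [simp]: "v \<in> H \<Longrightarrow> block v = H"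
  unfolding block_def by simp

lemma block_outside [simp]: "v \<notin> H \<Longrightarrow> block v = {v}"
  unfolding block_def by simp

lemma block_eq_block_iff: "block u = block v \<longleftrightarrow> u = v \<or> u \<in> H \<and> v \<in> H"
  unfolding block_def by auto

lemma nodes_contraction: "nodes Zc = block ` nodes Z"
  using H_subset h_in_H unfolding contraction_def block_def by auto

lemma mem_contraction_node: "S \<in> nodes Zc \<Longrightarrow> a \<in> S \<Longrightarrow> S = block a"
  unfolding nodes_contraction block_def by auto

lemma arcs_contraction:
  "(S, T) \<in> arcs Zc \<longleftrightarrow> (\<exists>a b. (a, b) \<in> arcs Z \<and> S = block a \<and> T = block b \<and> S \<noteq> T)"
proof -
  have arcs_eq: "arcs Zc = {(S, T). S \<in> nodes Zc \<and> T \<in> nodes Zc \<and> S \<noteq> T \<and>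
      (\<exists>a\<in>S. \<exists>b\<in>T. (a, b) \<in> arcs Z)}"
    by (simp add: contraction_def)
  have block_node: "block a \<in> nodes Zc" if "a \<in> nodes Z" for a
    using that unfolding nodes_contraction by blast
  have mem_block: "a \<in> block a" for a
    unfolding block_def by simp
  show ?thesis
  proof
    assume "(S, T) \<in> arcs Zc"
    then obtain a b where "S \<in> nodes Zc" "T \<in> nodes Zc" "S \<noteq> T" "a \<in> S" "b \<in> T" "(a, b) \<in> arcs Z"
      unfolding arcs_eq by blast
    then show "\<exists>a b. (a, b) \<in> arcs Z \<and> S = block a \<and> T = block b \<and> S \<noteq> T"
      using mem_contraction_node by blast
  next
    assume "\<exists>a b. (a, b) \<in> arcs Z \<and> S = block a \<and> T = block b \<and> S \<noteq> T"
    then obtain a b where "(a, b) \<in> arcs Z" "S = block a" "T = block b" "S \<noteq> T" by blast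
    moreover have "a \<in> nodes Z" "b \<in> nodes Z" using calculation(1) arcs_subset by auto
    ultimately show "(S, T) \<in> arcs Zc"
      unfolding arcs_eq using block_node mem_block by blast
  qed
qed

lemma alab_contraction:
  assumes "(a, b) \<in> arcs Z" "block a \<noteq> block b"
  shows "alab Zc (block a, block b) = alab Z (a, b)"
proof -
  have same_label: "alab Z (a', b') = alab Z (a, b)"
    if "a' \<in> block a" "b' \<in> block b" "(a', b') \<in> arcs Z" for a' b'
  proof (cases "a \<in> H")
    case True
    then have "b \<notin> H" using assms(2) block_eq_block_iff by blast
    moreover have "a' \<in> H" "b' = b" using that(1,2) True \<open>b \<notin> H\<close> by simp_all
    ultimately show ?thesis using exit_label_uniform True assms(1) that(3) by blast
  next
    case False
    then have "a' = a" using that by simp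
    moreover have "b' = b"
    proof (cases "b \<in> H")
      case True
      then have "b' \<in> H" using that(2) by simp
      then show ?thesis using entry_is_h False True assms(1) that(3) \<open>a' = a\<close> by metis
    next
      case False
      then show ?thesis using that(2) by simp
    qed
    ultimately show ?thesis by simp
  qed
  have "a \<in> block a" "b \<in> block b" unfolding block_def by simp_all
  then have "(SOME r. \<exists>a'\<in>block a. \<exists>b'\<in>block b. (a', b') \<in> arcs Z \<and> alab Z (a', b') = r)
      = alab Z (a, b)"
    using assms(1) same_label by (intro some_equality) blast+
  moreover have "alab Zc = (\<lambda>(S, T). SOME r. \<exists>a\<in>S. \<exists>b\<in>T. (a, b) \<in> arcs Z \<and> alab Z (a, b) = r)"
    unfolding contraction_def by (rule dstruct.select_convs)
  ultimately show ?thesis by simp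
qed

lemma nlab_contraction_module: "nlab Zc H = derived_action Zh"
  by (simp add: contraction_def)

lemma nlab_contraction_outside: "v \<notin> H \<Longrightarrow> nlab Zc {v} = nlab Z v"
  by (auto simp: contraction_def)

lemma moves_contraction:
  assumes "moves Z w v u" "block v \<noteq> block u" "snd (nlab Zc (block v)) w = snd (nlab Z v) w"
  shows "moves Zc w (block v) (block u)"
proof -
  have "(block v, block u) \<in> arcs Zc" using assms(1,2) arcs_contraction by blast
  moreover have "alab Zc (block v, block u) = snd (nlab Zc (block v)) w"
    using assms alab_contraction by simp
  ultimately show ?thesis by blast
qed

lemma distinct_labels_contraction: "distinct_arc_labels Zc"
  unfolding distinct_arc_labels_def
proof (intro allI impI notI)
  fix S T1 T2
  assume arcs: "(S, T1) \<in> arcs Zc \<and> (S, T2) \<in> arcs Zc \<and> T1 \<noteq> T2"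
    and eq: "alab Zc (S, T1) = alab Zc (S, T2)"
  obtain a1 b1 where 1: "(a1, b1) \<in> arcs Z" "S = block a1" "T1 = block b1" "S \<noteq> T1"
    using arcs unfolding arcs_contraction by blast
  obtain a2 b2 where 2: "(a2, b2) \<in> arcs Z" "S = block a2" "T2 = block b2" "S \<noteq> T2"
    using arcs unfolding arcs_contraction by blast
  have "b1 \<noteq> b2" using arcs 1(3) 2(3) by blast
  have "alab Zc (S, T1) = alab Z (a1, b1)"
    using alab_contraction[OF 1(1)] 1(2-4) by simp
  moreover have "alab Zc (S, T2) = alab Z (a2, b2)"
    using alab_contraction[OF 2(1)] 2(2-4) by simp
  ultimately have labels: "alab Z (a1, b1) = alab Z (a2, b2)" using eq by simp
  show False
  proof (cases "S = H")
    case True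
    then have "a1 \<in> H" "a2 \<in> H" "b1 \<notin> H" "b2 \<notin> H"
      using 1(2-4) 2(2-4) block_eq_H_iff by metis+
    obtain s where s:
      "\<And>a u. a \<in> H \<Longrightarrow> u \<notin> H \<Longrightarrow> (a, u) \<in> arcs Z \<Longrightarrow> (s, u) \<in> arcs Z \<and> alab Z (s, u) = alab Z (a, u)"
      using module_sink by blast
    have "(s, b1) \<in> arcs Z" "(s, b2) \<in> arcs Z" "alab Z (s, b1) = alab Z (s, b2)"
      using s[OF \<open>a1 \<in> H\<close> \<open>b1 \<notin> H\<close> 1(1)] s[OF \<open>a2 \<in> H\<close> \<open>b2 \<notin> H\<close> 2(1)] labels by simp_all
    then show False using distinct_arc_labelsD[OF distinct_labels] \<open>b1 \<noteq> b2\<close> by blast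
  next
    case False
    then have "a1 = a2" using 1(2) 2(2) block_eq_block_iff block_inside by metis
    then show False
      using distinct_arc_labelsD[OF distinct_labels 1(1)] 2(1) labels \<open>b1 \<noteq> b2\<close> by blast
  qed
qed

lemma source_contraction: "source Zc = block (source Z)"
proof -
  let ?s = "source Z"
  have s: "?s \<in> nodes Z" "\<And>u. u \<in> nodes Z \<Longrightarrow> (u, ?s) \<notin> arcs Z"
    using source_is_source unfolding is_source_def by auto
  have "is_source Zc (block ?s)"
    unfolding is_source_def
  proof (intro conjI ballI notI)
    show "block ?s \<in> nodes Zc" using s(1) unfolding nodes_contraction by blast
  next
    fix T assume "(T, block ?s) \<in> arcs Zc"
    then obtain a b where ab: "(a, b) \<in> arcs Z" "T = block a" "block b = block ?s" "T \<noteq> block ?s"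
      using arcs_contraction by metis
    have "b = ?s"
    proof (cases "?s \<in> H")
      case True
      then have "a \<notin> H" "b \<in> H" using ab(2-4) by auto
      then show ?thesis using entry_is_h ab(1) source_in_H_eq_h True by simp
    next
      case False
      then show ?thesis using ab(3) block_eq_block_iff by blast
    qed
    then show False using ab(1) arcs_subset s(2) by blast
  qed
  moreover have "T = block ?s" if T: "is_source Zc T" for T
  proof -
    have no_arc: "(block u, T) \<notin> arcs Zc" if "u \<in> nodes Z" for u
      using T that unfolding is_source_def nodes_contraction by blast
    obtain t0 where t0: "t0 \<in> nodes Z" "T = block t0"
      using T unfolding is_source_def nodes_contraction by blast
    define t where "t = (if t0 \<in> H then h else t0)"
    have t: "t \<in> nodes Z" "T = block t" "t \<in> H \<Longrightarrow> t = h"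
      using t0 h_in_H H_subset unfolding t_def block_def by auto
    have "is_source Z t"
      unfolding is_source_def
    proof (intro conjI ballI notI)
      fix u assume u: "u \<in> nodes Z" "(u, t) \<in> arcs Z"
      have "block u = block t" using no_arc[OF u(1)] arcs_contraction u(2) t(2) by blast
      then have "u = t \<or> u \<in> H \<and> t = h" using t(3) block_eq_block_iff by blast
      then show False using u(2) no_self_arc no_arc_into_h by blast
    qed (rule t(1))
    then show ?thesis using t(2) is_source_unique by simp
  qed
  ultimately show ?thesis unfolding source_def[of Zc] by (rule the_equality)
qed

lemma no_moves_contraction:
  assumes "\<not> (\<exists>u. moves Z w v u)" "snd (nlab Zc (block v)) w = snd (nlab Z v) w"
  shows "\<not> (\<exists>T. moves Zc w (block v) T)"
proof
  assume "\<exists>T. moves Zc w (block v) T"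
  then obtain T where T: "moves Zc w (block v) T" by blast
  then obtain a b where ab: "(a, b) \<in> arcs Z" "block v = block a" "T = block b" "block v \<noteq> T"
    unfolding arcs_contraction by blast
  have label: "alab Z (a, b) = snd (nlab Z v) w"
    using T ab alab_contraction assms(2) by simp
  show False
  proof (cases "v \<in> H")
    case True
    then have "a \<in> H" "b \<notin> H" using ab(2-4) block_eq_H_iff by metis+
    then obtain y where "(v, y) \<in> arcs Z" "alab Z (v, y) = alab Z (a, b)"
      using exit_label[OF _ _ ab(1) True] by blast
    then show False using assms(1) label by simp
  next
    case False
    then have "a = v" using ab(2) block_eq_block_iff by metis
    then show False using assms(1) ab(1) label by blast
  qed
qed

lemma eval_induced_module: "outputs Zh w h \<alpha> \<Longrightarrow> eval Zh w = \<alpha>"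
  using eval_eqI[OF distinct_arc_labels_induced[OF distinct_labels]] by (simp add: h_def)

lemma contraction_simulates:
  assumes "v \<in> nodes Z" "v \<in> H \<Longrightarrow> v = h" "outputs Z w v \<alpha>"
  shows "\<exists>\<beta>. outputs Zc w (block v) \<beta> \<and> fst \<beta> w = fst \<alpha> w"
  using assms
proof (induction v arbitrary: \<alpha> rule: wf_induct_rule[OF wf_trancl[OF wf_converse_arcs]])
  case (1 v)
  have IH: "\<exists>\<beta>. outputs Zc w (block u) \<beta> \<and> fst \<beta> w = fst \<alpha>' w"
    if "(v, u) \<in> (arcs Z)\<^sup>+" "u \<in> H \<Longrightarrow> u = h" "outputs Z w u \<alpha>'" for u \<alpha>'
  proof (rule "1.IH")
    show "(u, v) \<in> ((arcs Z)\<inverse>)\<^sup>+" using that(1) by (simp add: trancl_converse)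
    show "u \<in> nodes Z" using that(1) arcs_subset by (auto dest: tranclD2)
  qed (use that in blast)+
  show ?case
  proof (cases "v \<in> H")
    case False
    have label: "snd (nlab Zc (block v)) w = snd (nlab Z v) w"
      using False nlab_contraction_outside by simp
    from "1.prems"(3) show ?thesis
    proof cases
      case stop
      then have "outputs Zc w (block v) (nlab Zc (block v))"
        by (intro outputs.stop no_moves_contraction[OF _ label]) simp
      then have "outputs Zc w (block v) (nlab Z v)" using False nlab_contraction_outside by simp
      then show ?thesis using stop(1) by blast
    next
      case (move u)
      then have "u \<in> H \<Longrightarrow> u = h" using False entry_is_h by blast
      then obtain \<beta> where \<beta>: "outputs Zc w (block u) \<beta>" "fst \<beta> w = fst \<alpha> w"
        using IH move by blast
      have "block v \<noteq> block u"
        using False move(1) no_self_arc block_eq_block_iff by metis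
      then have "moves Zc w (block v) (block u)"
        using moves_contraction move(1,2) label by blast
      then show ?thesis using \<beta> outputs.move by metis
    qed
  next
    case True
    obtain x where "x \<in> H" and reach: "(v, x) \<in> (arcs Z)\<^sup>*"
      and run_H: "outputs Zh w v (nlab Z x)"
      and after_H: "\<alpha> = nlab Z x \<and> \<not> (\<exists>u. moves Z w x u) \<or>
        (\<exists>u. u \<notin> H \<and> moves Z w x u \<and> outputs Z w u \<alpha>)"
      using outputs_induced_decompose[OF distinct_labels "1.prems"(3) True] by blast
    have "eval Zh w = nlab Z x"
      using eval_induced_module run_H "1.prems"(2) True by simp
    then have action_H: "fst (nlab Zc H) w = fst (nlab Z x) w" "snd (nlab Zc (block x)) w = snd (nlab Z x) w"
      using \<open>x \<in> H\<close> by (simp_all add: nlab_contraction_module derived_action_def)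
    from after_H show ?thesis
    proof
      assume stop: "\<alpha> = nlab Z x \<and> \<not> (\<exists>u. moves Z w x u)"
      then have "outputs Zc w (block x) (nlab Zc (block x))"
        by (intro outputs.stop no_moves_contraction[OF _ action_H(2)]) simp
      then have "outputs Zc w (block v) (nlab Zc H)" using True \<open>x \<in> H\<close> by simp
      then show ?thesis using stop action_H(1) by (metis fst_conv)
    next
      assume "\<exists>u. u \<notin> H \<and> moves Z w x u \<and> outputs Z w u \<alpha>"
      then obtain u where u: "u \<notin> H" "moves Z w x u" "outputs Z w u \<alpha>" by blast
      have "(v, u) \<in> (arcs Z)\<^sup>+" using rtrancl_into_trancl1[OF reach] u(2) by blast
      then obtain \<beta> where \<beta>: "outputs Zc w {u} \<beta>" "fst \<beta> w = fst \<alpha> w"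
        using IH u by fastforce
      have "block x \<noteq> block u" using u(1) \<open>x \<in> H\<close> by auto
      then have "moves Zc w (block x) (block u)"
        using moves_contraction u(2) action_H(2) by blast
      then show ?thesis using \<beta> outputs.move True \<open>x \<in> H\<close> u(1) by fastforce
    qed
  qed
qed

end

theorem mainTheorem15:
  fixes Z :: "('n,'w,'s,'r) dstruct" and H :: "'n set"
  assumes "decision_structure Z" and "is_module Z H"
  shows "\<forall>w. fst (eval Z w) w = fst (eval (contraction Z H) w) w"
proof
  fix w
  interpret decision_module Z H using assms by unfold_locales
  obtain \<alpha> where \<alpha>: "outputs Z w (source Z) \<alpha>"
    using outputs_exists[OF wf_converse_arcs] by blast
  obtain \<beta> where \<beta>: "outputs Zc w (block (source Z)) \<beta>" "fst \<beta> w = fst \<alpha> w"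
    using contraction_simulates[OF _ source_in_H_eq_h \<alpha>] source_is_source
    unfolding is_source_def by blast
  have "eval Z w = \<alpha>" using eval_eqI[OF distinct_labels \<alpha>] .
  moreover have "eval Zc w = \<beta>"
    using eval_eqI[OF distinct_labels_contraction] \<beta>(1) source_contraction by simp
  ultimately show "fst (eval Z w) w = fst (eval Zc w) w" using \<beta>(2) by simp
qed

end
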